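(* Let $k,k'\in\mathbb{N}$ with $1\le k'\le k$. Let $\bar w,\bar x,\bar y,\bar z$ be binary sequences with $|\bar w|\ge|\bar x|\ge|\bar y|\ge|\bar z|$, each of which is top $k'$ sorted, and let $s=|\bar w|+|\bar x|+|\bar y|+|\bar z|\ge k$. Then $\mathrm{4oe\_merge}^s_k(\bar w,\bar x,\bar y,\bar z)$ is top $k'$ sorted.
   Context: Sorted means non-increasing. A binary sequence $\bar r$ of length $n$ is top $k'$ sorted if $\langle r_1,\dots,r_{\min(k',n)}\rangle$ is sorted and $r_i\ge r_j$ for all $i\le k'<j\le n$ (for $n\le k'$ this just means sorted). $\bar r_{odd}=\langle r_1,r_3,\dots\rangle$, $\bar r_{even}=\langle r_2,r_4,\dots\rangle$. For sequences $\bar a^1,\dots,\bar a^p$ with non-increasing lengths, $\mathrm{zip}(\bar a^1,\dots,\bar a^p)$ lists their elements in row-major order: $\langle a^1_1,a^2_1,\dots,a^p_1\rangle$ followed by $\mathrm{zip}$ of the remainders, where sequences that become empty are omitted. $\mathrm{oe\_combine}_K(\bar a,\bar b)$ (for $|\bar a|\ge|\bar b|$): let $\bar u=\mathrm{zip}(\bar a,\bar b)$; for $i=1,\dots,\lfloor\min(K,|\bar u|-1)/2\rfloor$ replace $(u_{2i},u_{2i+1})$ by $(\max,\min)$ of the pair; return $\bar u$. The network $\mathrm{4oe\_merge}^s_k(\bar w,\bar x,\bar y,\bar z)$ (for $|\bar w|\ge|\bar x|\ge|\bar y|\ge|\bar z|$, $s$ their total length, $k\ge 0$) is defined recursively, with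 $k_1,\dots,k_4$ the lengths of $\bar w,\bar x,\bar y,\bar z$: if $k_2=0$, return $\bar w$; else if $k_1=1$, return $\mathrm{zip}(\bar w,\bar x,\bar y,\bar z)$ sorted into non-increasing order; otherwise let $sa=\sum_j\lceil k_j/2\rceil$, $sb=\sum_j\lfloor k_j/2\rfloor$, $\bar a=\mathrm{4oe\_merge}^{sa}_{\min(sa,\lfloor k/2\rfloor+2)}(\bar w_{odd},\bar x_{odd},\bar y_{odd},\bar z_{odd})$, $\bar b=\mathrm{4oe\_merge}^{sb}_{\min(sb,\lfloor k/2\rfloor)}(\bar w_{even},\bar x_{even},\bar y_{even},\bar z_{even})$, $\bar c=\mathrm{oe\_combine}_{\lfloor k/2\rfloor+1}(\bar a_{odd},\bar b_{odd})$, $\bar d=\mathrm{oe\_combine}_{\lfloor k/2\rfloor}(\bar a_{even},\bar b_{even})$, and return $\mathrm{oe\_combine}_k(\bar c,\bar d)$. *)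

theory Defs
  imports Main
begin

text \<open>Binary sequences are bool lists, with False < True (0 < 1).
  Positions are 0-indexed in Isabelle; paper positions are 1-indexed.\<close>

definition sorted_desc :: "bool list \<Rightarrow> bool" where
  "sorted_desc r = sorted_wrt (\<ge>) r"

text \<open>top k' sorted: r_1..r_{min(k',n)} sorted and r_i \<ge> r_j for i \<le> k' < j \<le> n
  (1-indexed), i.e. i < k' \<le> j < n 0-indexed.\<close>
definition top_sorted :: "nat \<Rightarrow> bool list \<Rightarrow> bool" where
  "top_sorted k' r \<longleftrightarrow> sorted_desc (take k' r) \<and>
     (\<forall>i j. i < k' \<longrightarrow> k' \<le> j \<longrightarrow> j < length r \<longrightarrow> r ! j \<le> r ! i)"

text \<open>odds: r_1, r_3, ... (1-indexed); evens: r_2, r_4, ...\<close>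
fun odds :: "'a list \<Rightarrow> 'a list" where
  "odds [] = []"
| "odds [a] = [a]"
| "odds (a # b # xs) = a # odds xs"

definition evens :: "'a list \<Rightarrow> 'a list" where
  "evens xs = odds (drop 1 xs)"

lemma length_odds: "length (odds xs) = (length xs + 1) div 2"
  by (induction xs rule: odds.induct) auto

lemma length_evens: "length (evens xs) = length xs div 2"
  by (simp add: evens_def length_odds)

text \<open>Row-major zip of several sequences; row i consists of the i-th elements
  of those sequences that are long enough (exhausted sequences are omitted).\<close>
definition zipn :: "'a list list \<Rightarrow> 'a list" where
  "zipn xss = concat (map (\<lambda>i. map (\<lambda>xs. xs ! i) (filter (\<lambda>xs. i < length xs) xss))
                          [0..<Max (insert 0 (set (map length xss)))])"

text \<open>Comparator on paper positions (2i, 2i+1), i.e. 0-indexed (2i-1, 2i).\<close>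
definition cmp_pair :: "bool list \<Rightarrow> nat \<Rightarrow> bool list" where
  "cmp_pair u i = u[2*i - 1 := max (u ! (2*i - 1)) (u ! (2*i)), 2*i := min (u ! (2*i - 1)) (u ! (2*i))]"

definition oe_combine :: "nat \<Rightarrow> bool list \<Rightarrow> bool list \<Rightarrow> bool list" where
  "oe_combine K a b = (let u = zipn [a, b]; m = min K (length u - 1) div 2
                       in fold (\<lambda>i v. cmp_pair v i) [1..<m+1] u)"

text \<open>4oe_merge^s_k(w,x,y,z); the parameter s is always the total length of the inputs,
  so it is not passed explicitly. The base case test "k1 = 1" is written "k1 \<le> 1";
  under the standing assumption k1 \<ge> k2 > 0 these coincide (the form used here makes
  the function total on all inputs).\<close>
function merge4 :: "nat \<Rightarrow> bool list \<Rightarrow> bool list \<Rightarrow> bool list \<Rightarrow> bool list \<Rightarrow> bool list" where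
  "merge4 k w x y z =
    (if length x = 0 then w
     else if length w \<le> 1 then rev (sort (zipn [w, x, y, z]))
     else
       (let sa = (length w + 1) div 2 + (length x + 1) div 2 + (length y + 1) div 2 + (length z + 1) div 2;
            sb = length w div 2 + length x div 2 + length y div 2 + length z div 2;
            a = merge4 (min sa (k div 2 + 2)) (odds w) (odds x) (odds y) (odds z);
            b = merge4 (min sb (k div 2)) (evens w) (evens x) (evens y) (evens z);
            c = oe_combine (k div 2 + 1) (odds a) (odds b);
            d = oe_combine (k div 2) (evens a) (evens b)
        in oe_combine k c d))"
  by pat_completeness auto
termination
  by (relation "measure (\<lambda>(k, w, x, y, z). length w + length x + length y + length z)")
     (auto simp: length_odds length_evens intro!: add_less_le_mono add_le_mono)

end

theory Submission
  imports Defs "HOL-Library.Multiset"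
begin

text \<open>Write \<open>L r\<close> for the number of leading ones of a binary sequence \<open>r\<close>. A sequence is top
  \<open>k\<close> sorted iff \<open>L r \<ge> min k (number of ones in r)\<close>. Since the network permutes its input, it
  therefore suffices to show that \<open>4oe_merge\<^sub>k(w,x,y,z)\<close> has at least
  \<open>min k (L w + L x + L y + L z)\<close> leading ones. This follows by induction along the recursion:
  the odd and even subsequences of a sequence with \<open>n\<close> leading ones have \<open>\<lceil>n/2\<rceil>\<close> and
  \<open>\<lfloor>n/2\<rfloor>\<close> leading ones, so the guaranteed numbers of leading ones of the two recursive results
  differ by at most 4, and an odd-even combine of sequences with \<open>p\<close> and \<open>q\<close> leading ones,
  \<open>q \<le> p \<le> q + 2\<close>, has \<open>min K (p + q)\<close> leading ones: interleaving leaves at most one gap,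
  at position \<open>2q+1\<close>, and the comparator there closes it.\<close>

lemma odds_Cons: "odds (a # xs) = a # evens xs"
  by (cases xs) (auto simp: evens_def)

lemma evens_Cons: "evens (a # xs) = odds xs"
  by (simp add: evens_def)

lemma mset_odds_evens: "mset (odds xs) + mset (evens xs) = mset xs"
  by (induction xs) (simp_all add: odds_Cons evens_Cons evens_def ac_simps)

lemma zipn2_Cons: "zipn [a # as, b # bs] = a # b # zipn [as, bs]"
proof -
  define F where "F = (\<lambda>i. map (\<lambda>xs. xs ! i) (filter (\<lambda>xs. i < length xs) [a # as, b # bs]))"
  define G where "G = (\<lambda>i. map (\<lambda>xs. xs ! i) (filter (\<lambda>xs. i < length xs) [as, bs]))"
  define n where "n = max (length as) (length bs)"
  have "zipn [a # as, b # bs] = concat (map F [0..<Suc n])"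
    by (simp add: zipn_def F_def n_def)
  also have "\<dots> = F 0 @ concat (map (F \<circ> Suc) [0..<n])"
    by (simp add: upt_conv_Cons map_Suc_upt[symmetric] del: upt_Suc)
  also have "map (F \<circ> Suc) [0..<n] = map G [0..<n]"
    by (rule map_cong) (simp_all add: F_def G_def)
  also have "concat (map G [0..<n]) = zipn [as, bs]"
    by (simp add: zipn_def G_def n_def)
  finally show ?thesis by (simp add: F_def)
qed

lemma zipn2_Nil: "zipn [xs, []] = xs"
proof -
  have "zipn [xs, []] = concat (map (\<lambda>i. [xs ! i]) [0..<length xs])"
    unfolding zipn_def by (intro arg_cong[where f = concat] map_cong) auto
  also have "\<dots> = map (\<lambda>i. xs ! i) [0..<length xs]"
    by (induction xs rule: rev_induct) auto
  finally show ?thesis by (simp add: map_nth)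
qed

lemma length_zipn2: "length ys \<le> length xs \<Longrightarrow> length (zipn [xs, ys]) = length xs + length ys"
proof (induction ys arbitrary: xs)
  case (Cons b bs)
  then show ?case by (cases xs) (auto simp: zipn2_Cons)
qed (simp add: zipn2_Nil)

lemma mset_zipn2: "length ys \<le> length xs \<Longrightarrow> mset (zipn [xs, ys]) = mset xs + mset ys"
proof (induction ys arbitrary: xs)
  case (Cons b bs)
  then show ?case by (cases xs) (auto simp: zipn2_Cons)
qed (simp add: zipn2_Nil)

lemma nth_zipn2:
  "length ys \<le> length xs \<Longrightarrow> j < length xs + length ys \<Longrightarrow>
   zipn [xs, ys] ! j = (if j < 2 * length ys then (if even j then xs else ys) ! (j div 2)
                        else xs ! (j - length ys))"
proof (induction ys arbitrary: xs j)
  case Nil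
  then show ?case by (simp add: zipn2_Nil)
next
  case (Cons b bs)
  then obtain a as where xs: "xs = a # as"
    by (cases xs) auto
  consider "j = 0" | "j = 1" | j' where "j = Suc (Suc j')"
    by (metis One_nat_def not0_implies_Suc)
  then show ?case
    using Cons.IH[of as] Cons.prems by cases (auto simp: xs zipn2_Cons)
qed

lemma mset_cmp_pair:
  assumes "2 * i < length u"
  shows "mset (cmp_pair u i) = mset u"
proof (cases "u ! (2*i - 1) \<or> \<not> u ! (2*i)")
  case True
  then have "max (u ! (2*i - 1)) (u ! (2*i)) = u ! (2*i - 1)" "min (u ! (2*i - 1)) (u ! (2*i)) = u ! (2*i)"
    by (auto simp: max_def min_def)
  then show ?thesis by (simp add: cmp_pair_def)
next
  case False
  then have "max (u ! (2*i - 1)) (u ! (2*i)) = u ! (2*i)" "min (u ! (2*i - 1)) (u ! (2*i)) = u ! (2*i - 1)"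
    by (auto simp: max_def min_def)
  then show ?thesis
    using assms mset_swap[of "2*i" u "2*i - 1"] by (simp add: cmp_pair_def)
qed

lemma length_cmp_pair [simp]: "length (cmp_pair u i) = length u"
  by (simp add: cmp_pair_def)

lemma length_fold_cmp_pair [simp]: "length (fold (\<lambda>i v. cmp_pair v i) ns u) = length u"
  by (induction ns arbitrary: u) simp_all

lemma mset_fold_cmp_pair:
  "\<forall>i \<in> set ns. 2 * i < length u \<Longrightarrow> mset (fold (\<lambda>i v. cmp_pair v i) ns u) = mset u"
  by (induction ns arbitrary: u) (simp_all add: mset_cmp_pair)

lemma nth_fold_cmp_pair:
  assumes "2 * m < length u" and "j < length u"
  shows "fold (\<lambda>i v. cmp_pair v i) [1..<m+1] u ! j =
    (if 0 < j \<and> j \<le> 2*m then (if odd j then u ! j \<or> u ! (j+1) else u ! (j-1) \<and> u ! j) else u ! j)"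
  using assms
proof (induction m arbitrary: j)
  case (Suc m)
  define v where "v = fold (\<lambda>i v. cmp_pair v i) [1..<m+1] u"
  have v: "v ! i = (if 0 < i \<and> i \<le> 2*m then (if odd i then u ! i \<or> u ! (i+1) else u ! (i-1) \<and> u ! i)
                   else u ! i)" if "i < length u" for i
    using Suc.IH[OF _ that] Suc.prems(1) unfolding v_def by simp
  have "fold (\<lambda>i v. cmp_pair v i) [1..<Suc m + 1] u = cmp_pair v (Suc m)"
    by (simp add: v_def)
  also have "\<dots> = v[2*m + 1 := u ! (2*m + 1) \<or> u ! (2*m + 2), 2*m + 2 := u ! (2*m + 1) \<and> u ! (2*m + 2)]"
    using v[of "2*m + 1"] v[of "2*m + 2"] Suc.prems(1)
    by (auto simp: cmp_pair_def max_def min_def numeral_2_eq_2)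
  finally show ?case
    using v[of j] Suc.prems by (auto simp: v_def nth_list_update)
qed simp

lemma length_oe_combine:
  "length ys \<le> length xs \<Longrightarrow> length (oe_combine K xs ys) = length xs + length ys"
  by (simp add: oe_combine_def Let_def length_zipn2)

lemma mset_oe_combine:
  "length ys \<le> length xs \<Longrightarrow> mset (oe_combine K xs ys) = mset xs + mset ys"
  unfolding oe_combine_def Let_def by (subst mset_fold_cmp_pair) (auto simp: mset_zipn2)

lemma nth_oe_combine:
  fixes K :: nat
  assumes "length ys \<le> length xs" and "j < length xs + length ys"
  defines "u \<equiv> zipn [xs, ys]"
  defines "m \<equiv> min K (length u - 1) div 2"
  shows "oe_combine K xs ys ! j =
    (if 0 < j \<and> j \<le> 2*m then (if odd j then u ! j \<or> u ! (j+1) else u ! (j-1) \<and> u ! j) else u ! j)"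
proof -
  have "length u = length xs + length ys"
    using assms(1) by (simp add: u_def length_zipn2)
  then show ?thesis
    using nth_fold_cmp_pair[of m u j] assms(2) unfolding oe_combine_def Let_def u_def m_def
    by (simp add: less_diff_conv)
qed

definition leading_ones :: "bool list \<Rightarrow> nat" where
  "leading_ones r = length (takeWhile id r)"

lemma leading_ones_simps [simp]:
  "leading_ones [] = 0"
  "leading_ones (a # r) = (if a then Suc (leading_ones r) else 0)"
  by (simp_all add: leading_ones_def)

lemma le_leading_ones_iff: "n \<le> leading_ones r \<longleftrightarrow> n \<le> length r \<and> (\<forall>j<n. r ! j)"
proof (induction r arbitrary: n)
  case (Cons a r)
  then show ?case by (cases n) (auto simp: All_less_Suc2)
qed auto

lemma leading_ones_le_length: "leading_ones r \<le> length r"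
  by (induction r) auto

lemma leading_ones_le_count: "leading_ones r \<le> count (mset r) True"
  by (induction r) auto

lemma count_True_leading_ones:
  "count (mset r) True = leading_ones r + count (mset (drop (leading_ones r) r)) True"
  by (induction r) auto

lemma not_nth_leading_ones: "leading_ones r < length r \<Longrightarrow> \<not> r ! leading_ones r"
  by (induction r) auto

lemma leading_ones_odds: "(leading_ones xs + 1) div 2 \<le> leading_ones (odds xs)"
  by (induction xs rule: odds.induct) auto

lemma leading_ones_evens: "leading_ones xs div 2 \<le> leading_ones (evens xs)"
  using leading_ones_odds[of "tl xs"] by (cases xs) (auto simp: evens_Cons)

lemma nth_zipn2_leading_ones:
  assumes ly: "length y \<le> length x"
    and p: "p \<le> leading_ones x" and q: "q \<le> leading_ones y"
    and balanced: "q \<le> p" "p \<le> q + 2"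
  shows "j < p + q \<Longrightarrow> \<not> (p = q + 2 \<and> q < length y \<and> j = 2*q + 1) \<Longrightarrow> zipn [x, y] ! j"
    and "p = q + 2 \<Longrightarrow> q < length y \<Longrightarrow> zipn [x, y] ! (2*q + 2)"
proof -
  have px: "p \<le> length x" "\<And>i. i < p \<Longrightarrow> x ! i" and qy: "q \<le> length y" "\<And>i. i < q \<Longrightarrow> y ! i"
    using p q by (auto simp: le_leading_ones_iff)
  have u_nth: "zipn [x, y] ! j = (if j < 2 * length y then (if even j then x else y) ! (j div 2)
                                  else x ! (j - length y))" if "j < length x + length y" for j
    using nth_zipn2[OF ly that] .
  show "zipn [x, y] ! j" if j: "j < p + q" and no_gap: "\<not> (p = q + 2 \<and> q < length y \<and> j = 2*q + 1)"
  proof (cases "j < 2 * length y")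
    case True
    show ?thesis
    proof (cases "even j")
      case True
      then have "j div 2 < p" using j balanced by presburger
      then show ?thesis using u_nth[of j] j px qy \<open>j < 2 * length y\<close> True by simp
    next
      case False
      then have "j div 2 < q" using j balanced no_gap \<open>j < 2 * length y\<close> by presburger
      then show ?thesis using u_nth[of j] j px qy \<open>j < 2 * length y\<close> False by simp
    qed
  next
    case False
    then have "j - length y < p" using j qy by linarith
    then show ?thesis using u_nth[of j] j px qy False by simp
  qed
  show "zipn [x, y] ! (2*q + 2)" if "p = q + 2" "q < length y"
  proof -
    have "2*q + 2 < length x + length y" and "x ! (q + 1)"
      using that px qy by auto
    moreover have "2*q + 2 < 2 * length y \<or> length y = q + 1"
      using that by auto
    ultimately show ?thesis using u_nth[of "2*q + 2"] by auto
  qed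
qed

lemma leading_ones_oe_combine_balanced:
  assumes ly: "length y \<le> length x"
    and p: "p \<le> leading_ones x" and q: "q \<le> leading_ones y"
    and balanced: "q \<le> p" "p \<le> q + 2"
  shows "min K (p + q) \<le> leading_ones (oe_combine K x y)"
proof -
  define u where "u = zipn [x, y]"
  define m where "m = min K (length u - 1) div 2"
  define gap where "gap \<longleftrightarrow> p = q + 2 \<and> q < length y"
  note u_one = nth_zipn2_leading_ones(1)[OF assms, folded u_def]
  note gap_filled = nth_zipn2_leading_ones(2)[OF assms, folded u_def]
  have lengths: "p \<le> length x" "q \<le> length y" "length u = length x + length y"
    using p q ly by (auto simp: le_leading_ones_iff u_def length_zipn2)
  have "oe_combine K x y ! j" if j: "j < min K (p + q)" for j
  proof -
    have r_nth: "oe_combine K x y ! j = (if 0 < j \<and> j \<le> 2*m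
        then (if odd j then u ! j \<or> u ! (j+1) else u ! (j-1) \<and> u ! j) else u ! j)"
      using nth_oe_combine[OF ly, of j K] j lengths unfolding u_def m_def by simp
    show ?thesis
    proof (cases "gap \<and> j = 2*q + 1")
      case True
      then have "j \<le> 2*m" using j lengths unfolding m_def gap_def by auto
      then show ?thesis using r_nth True gap_filled unfolding gap_def by simp
    next
      case False
      then have "u ! j" using u_one j unfolding gap_def by simp
      moreover have "u ! (j - 1)"
        using u_one[of "j - 1"] j unfolding gap_def by fastforce
      ultimately show ?thesis using r_nth by auto
    qed
  qed
  moreover have "min K (p + q) \<le> length (oe_combine K x y)"
    using lengths ly by (simp add: length_oe_combine)
  ultimately show ?thesis
    unfolding le_leading_ones_iff by blast
qed

lemma leading_ones_oe_combine:
  assumes "length y \<le> length x" "p \<le> leading_ones x" "q \<le> leading_ones y"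
  shows "min K (min p (q + 2) + min q p) \<le> leading_ones (oe_combine K x y)"
  using leading_ones_oe_combine_balanced[OF assms(1), of "min p (q + 2)" "min q p"] assms(2,3)
  by simp

lemma top_sorted_iff_nth:
  "top_sorted k r \<longleftrightarrow> (\<forall>i j. i < j \<longrightarrow> j < length r \<longrightarrow> i < k \<longrightarrow> r ! j \<le> r ! i)"
  unfolding top_sorted_def sorted_desc_def sorted_wrt_iff_nth_less
  by (auto simp: nth_take dest: less_le_trans) (metis not_le nth_take)

lemma nth_eq_less_leading_ones:
  assumes "count (mset r) True \<le> leading_ones r" and "j < length r"
  shows "r ! j \<longleftrightarrow> j < leading_ones r"
proof (cases "j < leading_ones r")
  case True
  then show ?thesis using le_leading_ones_iff[of "leading_ones r" r] by simp
next
  case False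
  have "True \<notin> set (drop (leading_ones r) r)"
    using assms(1) count_True_leading_ones[of r] by simp
  moreover have "r ! j \<in> set (drop (leading_ones r) r)"
    using False assms(2) by (auto simp: in_set_conv_nth intro!: exI[of _ "j - leading_ones r"])
  ultimately show ?thesis using False by auto
qed

lemma top_sorted_iff_leading_ones:
  "top_sorted k r \<longleftrightarrow> min k (count (mset r) True) \<le> leading_ones r"
proof
  assume sorted: "top_sorted k r"
  show "min k (count (mset r) True) \<le> leading_ones r"
  proof (rule ccontr)
    let ?n = "leading_ones r"
    assume "\<not> ?thesis"
    then have n: "?n < k" "?n < count (mset r) True" by auto
    then have "?n < length r"
      using count_le_size[of "mset r" True] by simp
    then have "\<not> r ! ?n" by (rule not_nth_leading_ones)
    have "True \<in> set (drop ?n r)"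
      using n(2) count_True_leading_ones[of r] by (auto simp: count_mset_0_iff[symmetric])
    then obtain t where t: "t < length r - ?n" "r ! (?n + t)"
      by (auto simp: in_set_conv_nth)
    then have "?n < ?n + t"
      using \<open>\<not> r ! ?n\<close> by (cases t) auto
    moreover have "?n + t < length r"
      using t(1) by simp
    ultimately have "r ! (?n + t) \<le> r ! ?n"
      using sorted n(1) unfolding top_sorted_iff_nth by blast
    then show False
      using t(2) \<open>\<not> r ! ?n\<close> by simp
  qed
next
  assume bound: "min k (count (mset r) True) \<le> leading_ones r"
  show "top_sorted k r"
    unfolding top_sorted_iff_nth
  proof (intro allI impI)
    fix i j assume "i < j" "j < length r" "i < k"
    then show "r ! j \<le> r ! i"
      using bound nth_eq_less_leading_ones[of r] le_leading_ones_iff[of k r]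
      by (cases "k \<le> leading_ones r") auto
  qed
qed

lemma leading_ones_sorted_desc:
  assumes "sorted_desc r"
  shows "leading_ones r = count (mset r) True"
proof -
  have "top_sorted (length r) r"
    using assms by (simp add: top_sorted_def)
  then show ?thesis
    using top_sorted_iff_leading_ones leading_ones_le_count[of r] count_le_size[of "mset r" True]
    by (simp add: le_antisym)
qed

lemma leading_ones_rev_sort: "leading_ones (rev (sort r)) = count (mset r) True"
proof -
  have "sorted_desc (rev (sort r))"
    unfolding sorted_desc_def sorted_wrt_rev by (rule sorted_sort)
  then show ?thesis
    using leading_ones_sorted_desc by (metis mset_rev mset_sort)
qed

lemma zipn_singletons:
  assumes "length w \<le> 1" "length x \<le> length w" "length y \<le> length x" "length z \<le> length y"
  shows "zipn [w, x, y, z] = w @ x @ y @ z"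
  using assms by (cases w; cases x; cases y; cases z) (auto simp: zipn_def)

declare merge4.simps [simp del]

lemma mset_merge4:
  "length x \<le> length w \<Longrightarrow> length y \<le> length x \<Longrightarrow> length z \<le> length y \<Longrightarrow>
   mset (merge4 k w x y z) = mset w + mset x + mset y + mset z"
proof (induction k w x y z rule: merge4.induct)
  case (1 k w x y z)
  consider (empty) "length x = 0" | (base) "length x \<noteq> 0" "length w \<le> 1"
    | (step) "length x \<noteq> 0" "\<not> length w \<le> 1"
    by blast
  then show ?case
  proof cases
    case empty
    then show ?thesis using "1.prems" by (subst merge4.simps) simp
  next
    case base
    then show ?thesis using "1.prems" by (subst merge4.simps) (simp add: zipn_singletons)
  next
    case step
    define sa where "sa = (length w + 1) div 2 + (length x + 1) div 2 + (length y + 1) div 2 + (length z + 1) div 2"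
    define sb where "sb = length w div 2 + length x div 2 + length y div 2 + length z div 2"
    define a where "a = merge4 (min sa (k div 2 + 2)) (odds w) (odds x) (odds y) (odds z)"
    define b where "b = merge4 (min sb (k div 2)) (evens w) (evens x) (evens y) (evens z)"
    have merge: "merge4 k w x y z =
        oe_combine k (oe_combine (k div 2 + 1) (odds a) (odds b)) (oe_combine (k div 2) (evens a) (evens b))"
      using step by (subst merge4.simps) (simp only: Let_def sa_def sb_def a_def b_def if_False)
    have ma: "mset a = mset (odds w) + mset (odds x) + mset (odds y) + mset (odds z)"
      using "1.IH"(1)[OF step sa_def sb_def] "1.prems" unfolding a_def
      by (simp add: length_odds div_le_mono)
    have mb: "mset b = mset (evens w) + mset (evens x) + mset (evens y) + mset (evens z)"
      using "1.IH"(2)[OF step sa_def sb_def a_def] "1.prems" unfolding b_def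
      by (simp add: length_evens div_le_mono)
    have "length b \<le> length a"
      using arg_cong[OF ma, of size] arg_cong[OF mb, of size]
      by (simp add: length_odds length_evens add_mono div_le_mono)
    then have "length (evens b) \<le> length (evens a)" "length (odds b) \<le> length (odds a)"
      "length (evens a) + length (evens b) \<le> length (odds a) + length (odds b)"
      by (simp_all add: length_odds length_evens div_le_mono add_mono)
    then have "mset (merge4 k w x y z) = (mset (odds a) + mset (evens a)) + (mset (odds b) + mset (evens b))"
      unfolding merge by (simp add: mset_oe_combine length_oe_combine ac_simps)
    also have "\<dots> = mset a + mset b"
      by (simp only: mset_odds_evens)
    also have "\<dots> = mset w + mset x + mset y + mset z"
      unfolding ma mb
      by (simp add: ac_simps flip: mset_odds_evens[of w] mset_odds_evens[of x]
          mset_odds_evens[of y] mset_odds_evens[of z])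
    finally show ?thesis .
  qed
qed

lemma length_merge4:
  "length x \<le> length w \<Longrightarrow> length y \<le> length x \<Longrightarrow> length z \<le> length y \<Longrightarrow>
   length (merge4 k w x y z) = length w + length x + length y + length z"
  by (metis mset_merge4 size_mset size_union)

text \<open>The arithmetic of one recursion step: the odd half may have up to four more leading ones
  than the even half, which the bound \<open>h + 2\<close> of the odd recursive call and the
  \<open>+2\<close> slack of each odd-even combine absorb.\<close>
lemma leading_ones_layer_arith:
  fixes A B h k :: nat
  assumes "B \<le> A" "A \<le> B + 4" "k = 2*h \<or> k = 2*h + 1"
  defines "a0 \<equiv> min (h + 2) A" and "b0 \<equiv> min h B"
  defines "g \<equiv> min (h + 1) (min ((a0 + 1) div 2) ((b0 + 1) div 2 + 2) + min ((b0 + 1) div 2) ((a0 + 1) div 2))"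
  defines "d \<equiv> min h (min (a0 div 2) (b0 div 2 + 2) + min (b0 div 2) (a0 div 2))"
  shows "min k (A + B) \<le> min k (min g (d + 2) + min d g)"
proof -
  define a1 a2 b1 b2 where "a1 = (a0 + 1) div 2" "a2 = a0 div 2" "b1 = (b0 + 1) div 2" "b2 = b0 div 2"
  have halves: "a0 = a1 + a2" "a2 \<le> a1" "a1 \<le> a2 + 1" "b0 = b1 + b2" "b2 \<le> b1" "b1 \<le> b2 + 1"
    unfolding a1_a2_b1_b2_def by presburger+
  have "g = min (h + 1) (min a1 (b1 + 2) + min b1 a1)" "d = min h (min a2 (b2 + 2) + min b2 a2)"
    unfolding g_def d_def a1_a2_b1_b2_def by simp_all
  with halves assms(1-3) a0_def b0_def show ?thesis
    unfolding min_def by (auto split: if_splits)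
qed

lemma leading_ones_oe_combine_layer:
  fixes h :: nat
  assumes ab: "length b \<le> length a"
    and a: "min (h + 2) A \<le> leading_ones a" and b: "min h B \<le> leading_ones b"
    and "B \<le> A" "A \<le> B + 4" "k = 2*h \<or> k = 2*h + 1"
  shows "min k (A + B) \<le>
    leading_ones (oe_combine k (oe_combine (h + 1) (odds a) (odds b)) (oe_combine h (evens a) (evens b)))"
proof -
  define a0 where "a0 = min (h + 2) A"
  define b0 where "b0 = min h B"
  define g where "g = min (h + 1) (min ((a0 + 1) div 2) ((b0 + 1) div 2 + 2) + min ((b0 + 1) div 2) ((a0 + 1) div 2))"
  define d where "d = min h (min (a0 div 2) (b0 div 2 + 2) + min (b0 div 2) (a0 div 2))"
  have odds_ab: "length (odds b) \<le> length (odds a)" and evens_ab: "length (evens b) \<le> length (evens a)"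
    using ab by (simp_all add: length_odds length_evens div_le_mono)
  have "g \<le> leading_ones (oe_combine (h + 1) (odds a) (odds b))"
    unfolding g_def using a b
    by (intro leading_ones_oe_combine odds_ab le_trans[OF div_le_mono leading_ones_odds])
      (simp_all add: a0_def b0_def)
  moreover have "d \<le> leading_ones (oe_combine h (evens a) (evens b))"
    unfolding d_def using a b
    by (intro leading_ones_oe_combine evens_ab le_trans[OF div_le_mono leading_ones_evens])
      (simp_all add: a0_def b0_def)
  moreover have "length (oe_combine h (evens a) (evens b)) \<le> length (oe_combine (h + 1) (odds a) (odds b))"
    using odds_ab evens_ab by (simp add: length_oe_combine length_odds length_evens add_mono div_le_mono)
  ultimately have "min k (min g (d + 2) + min d g) \<le>
      leading_ones (oe_combine k (oe_combine (h + 1) (odds a) (odds b)) (oe_combine h (evens a) (evens b)))"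
    by (intro leading_ones_oe_combine)
  moreover have "min k (A + B) \<le> min k (min g (d + 2) + min d g)"
    unfolding g_def d_def a0_def b0_def by (rule leading_ones_layer_arith) fact+
  ultimately show ?thesis by linarith
qed

lemma leading_ones_merge4:
  "length x \<le> length w \<Longrightarrow> length y \<le> length x \<Longrightarrow> length z \<le> length y \<Longrightarrow>
   min k (leading_ones w + leading_ones x + leading_ones y + leading_ones z) \<le> leading_ones (merge4 k w x y z)"
proof (induction k w x y z rule: merge4.induct)
  case (1 k w x y z)
  consider (empty) "length x = 0" | (base) "length x \<noteq> 0" "length w \<le> 1"
    | (step) "length x \<noteq> 0" "\<not> length w \<le> 1"
    by blast
  then show ?case
  proof cases
    case empty
    then show ?thesis using "1.prems" by (subst merge4.simps) simp
  next
    case base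
    let ?l = "w @ x @ y @ z"
    have "merge4 k w x y z = rev (sort ?l)"
      using base "1.prems" by (subst merge4.simps) (simp add: zipn_singletons)
    moreover have "leading_ones w + leading_ones x + leading_ones y + leading_ones z \<le> count (mset ?l) True"
      using leading_ones_le_count[of w] leading_ones_le_count[of x] leading_ones_le_count[of y]
        leading_ones_le_count[of z] by simp
    ultimately show ?thesis by (simp add: leading_ones_rev_sort)
  next
    case step
    define h where "h = k div 2"
    define sa where "sa = (length w + 1) div 2 + (length x + 1) div 2 + (length y + 1) div 2 + (length z + 1) div 2"
    define sb where "sb = length w div 2 + length x div 2 + length y div 2 + length z div 2"
    define a where "a = merge4 (min sa (k div 2 + 2)) (odds w) (odds x) (odds y) (odds z)"
    define b where "b = merge4 (min sb (k div 2)) (evens w) (evens x) (evens y) (evens z)"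
    have merge: "merge4 k w x y z =
        oe_combine k (oe_combine (h + 1) (odds a) (odds b)) (oe_combine h (evens a) (evens b))"
      using step by (subst merge4.simps) (simp only: Let_def sa_def sb_def a_def b_def h_def if_False)
    have odds_lengths: "length (odds x) \<le> length (odds w)" "length (odds y) \<le> length (odds x)"
        "length (odds z) \<le> length (odds y)"
      and evens_lengths: "length (evens x) \<le> length (evens w)" "length (evens y) \<le> length (evens x)"
        "length (evens z) \<le> length (evens y)"
      using "1.prems" by (simp_all add: length_odds length_evens div_le_mono)
    define A where "A = (leading_ones w + 1) div 2 + (leading_ones x + 1) div 2
        + (leading_ones y + 1) div 2 + (leading_ones z + 1) div 2"
    define B where "B = leading_ones w div 2 + leading_ones x div 2 + leading_ones y div 2 + leading_ones z div 2"
    have halves: "(n + 1) div 2 + n div 2 = n" "n div 2 \<le> (n + 1) div 2"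
      "(n + 1) div 2 \<le> n div 2 + 1" for n :: nat
      by presburger+
    have "A \<le> sa" "B \<le> sb"
      unfolding A_def B_def sa_def sb_def
      by (intro add_mono div_le_mono add_right_mono leading_ones_le_length)+
    moreover have "A \<le> leading_ones (odds w) + leading_ones (odds x) + leading_ones (odds y) + leading_ones (odds z)"
      and "B \<le> leading_ones (evens w) + leading_ones (evens x) + leading_ones (evens y) + leading_ones (evens z)"
      unfolding A_def B_def by (intro add_mono leading_ones_odds leading_ones_evens)+
    ultimately have "min (h + 2) A \<le> leading_ones a" and "min h B \<le> leading_ones b"
      using "1.IH"(1)[OF step sa_def sb_def odds_lengths] "1.IH"(2)[OF step sa_def sb_def a_def evens_lengths]
      unfolding a_def b_def h_def by linarith+
    moreover have "length b \<le> length a"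
      using length_merge4[OF odds_lengths] length_merge4[OF evens_lengths] unfolding a_def b_def
      by (simp add: length_odds length_evens add_mono div_le_mono)
    moreover have "B \<le> A" "A \<le> B + 4"
      unfolding A_def B_def using halves(2,3) by (simp_all add: add_mono)
    moreover have "k = 2*h \<or> k = 2*h + 1"
      unfolding h_def by presburger
    ultimately have "min k (A + B) \<le> leading_ones (merge4 k w x y z)"
      unfolding merge by (intro leading_ones_oe_combine_layer)
    moreover have "A + B = leading_ones w + leading_ones x + leading_ones y + leading_ones z"
      unfolding A_def B_def using halves(1) by (simp add: ac_simps)
    ultimately show ?thesis by simp
  qed
qed

theorem mainTheorem8:
  fixes k k' :: nat and w x y z :: "bool list"
  assumes "1 \<le> k'" and "k' \<le> k"
    and "length w \<ge> length x" and "length x \<ge> length y" and "length y \<ge> length z"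
    and "top_sorted k' w" and "top_sorted k' x" and "top_sorted k' y" and "top_sorted k' z"
    and "length w + length x + length y + length z \<ge> k"
  shows "top_sorted k' (merge4 k w x y z)"
proof -
  let ?r = "merge4 k w x y z"
  let ?ones = "\<lambda>v. count (mset v) True"
  have inputs: "min k' (?ones v) \<le> leading_ones v" if "top_sorted k' v" for v
    using that top_sorted_iff_leading_ones by blast
  have "min k' (?ones ?r) = min k' (?ones w + ?ones x + ?ones y + ?ones z)"
    using mset_merge4[OF assms(3-5)] by simp
  also have "\<dots> \<le> min k (leading_ones w + leading_ones x + leading_ones y + leading_ones z)"
  proof -
    have "min k' (?ones w + ?ones x + ?ones y + ?ones z)
        \<le> min k' (?ones w) + min k' (?ones x) + min k' (?ones y) + min k' (?ones z)"
      by arith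
    then show ?thesis
      using inputs[OF assms(6)] inputs[OF assms(7)] inputs[OF assms(8)] inputs[OF assms(9)] assms(2)
      by (simp add: min.coboundedI1)
  qed
  also have "\<dots> \<le> leading_ones ?r"
    by (rule leading_ones_merge4[OF assms(3-5)])
  finally show ?thesis
    unfolding top_sorted_iff_leading_ones .
qed

end
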